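(* Let $k\geq 5$ be a natural number. If $$n \geq \frac{2}{\ln 2} k^2 + \left(2 - \frac{3}{\ln 2}\right) k + \frac{1}{\ln 2} \geq \frac{2^{\frac{1}{k-1}}(2k)-1}{2^{\frac{1}{k-1}}-1},$$ then $$t(K(n,k)) = \frac{n}{k} -1.$$ Moreover, any subset of vertices $S$ such that $t(K(n,k))=\frac{|S|}{c(K(n,k)\setminus S)}$ must be the complement of a maximum independent set in $K(n,k)$.
   Context: For integers $n\geq 2k+1$, the Kneser graph $K(n,k)$ has as vertices the $k$-element subsets of $[n]=\{1,\dots,n\}$, two vertices $A,B$ being adjacent iff $A\cap B=\emptyset$. For a connected graph $G$, a vertex cut is a set $S$ of vertices whose removal disconnects $G$; $c(G\setminus S)$ denotes the number of connected components of the graph obtained by deleting $S$. The toughness of $G$ is $t(G)=\min_S \frac{|S|}{c(G\setminus S)}$, the minimum over all vertex cuts $S$ of $G$. *)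

theory Defs
  imports Complex_Main
begin

definition kneser_vertices :: "nat \<Rightarrow> nat \<Rightarrow> nat set set" where
  "kneser_vertices n k = {A. A \<subseteq> {1..n} \<and> card A = k}"

definition kneser_adj :: "nat set \<Rightarrow> nat set \<Rightarrow> bool" where
  "kneser_adj A B \<longleftrightarrow> A \<inter> B = {}"

definition reach :: "'a set \<Rightarrow> ('a \<Rightarrow> 'a \<Rightarrow> bool) \<Rightarrow> 'a \<Rightarrow> 'a \<Rightarrow> bool" where
  "reach W E = (\<lambda>a b. a \<in> W \<and> b \<in> W \<and> E a b)\<^sup>*\<^sup>*"

definition components :: "'a set \<Rightarrow> ('a \<Rightarrow> 'a \<Rightarrow> bool) \<Rightarrow> 'a set set" where
  "components W E = {{y \<in> W. reach W E x y} | x. x \<in> W}"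

definition num_components :: "'a set \<Rightarrow> ('a \<Rightarrow> 'a \<Rightarrow> bool) \<Rightarrow> nat" where
  "num_components W E = card (components W E)"

definition vertex_cut :: "'a set \<Rightarrow> ('a \<Rightarrow> 'a \<Rightarrow> bool) \<Rightarrow> 'a set \<Rightarrow> bool" where
  "vertex_cut V E S \<longleftrightarrow> S \<subseteq> V \<and> num_components (V - S) E \<ge> 2"

definition toughness :: "'a set \<Rightarrow> ('a \<Rightarrow> 'a \<Rightarrow> bool) \<Rightarrow> real" where
  "toughness V E = Min {real (card S) / real (num_components (V - S) E) | S. vertex_cut V E S}"

definition independent_set :: "'a set \<Rightarrow> ('a \<Rightarrow> 'a \<Rightarrow> bool) \<Rightarrow> 'a set \<Rightarrow> bool" where
  "independent_set V E I \<longleftrightarrow> I \<subseteq> V \<and> (\<forall>x\<in>I. \<forall>y\<in>I. \<not> E x y)"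

definition maximum_independent_set :: "'a set \<Rightarrow> ('a \<Rightarrow> 'a \<Rightarrow> bool) \<Rightarrow> 'a set \<Rightarrow> bool" where
  "maximum_independent_set V E I \<longleftrightarrow> independent_set V E I \<and>
     (\<forall>J. independent_set V E J \<longrightarrow> card J \<le> card I)"

end

theory Submission
  imports Defs "HOL-Combinatorics.Multiset_Permutations"
begin

text \<open>Let \<open>S\<close> be a vertex cut of \<open>K(n, k)\<close> leaving \<open>c\<close> components, and count the pairs of a
  component and a vertex of \<open>S\<close> adjacent to it. Every component has at least \<open>(n - k) choose k\<close>
  neighbours, since the vertex connectivity of \<open>K(n, k)\<close> equals its degree: an atom meeting its
  image under an automorphism equals it, the symmetric group acts transitively on pairs of
  \<open>k\<close>-sets with a given intersection size, and such pairs connect all \<open>k\<close>-sets, so an atom is a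
  single vertex. Conversely, the components adjacent to a vertex \<open>Y\<close> have representatives
  disjoint from \<open>Y\<close> that pairwise intersect, so by the Erdos--Ko--Rado theorem on the \<open>n - k\<close>
  points outside \<open>Y\<close> there are at most \<open>k / (n - k) * ((n - k) choose k)\<close> of them. Hence
  \<open>(n - k) c \<le> k |S|\<close>, i.e. \<open>|S| / c \<ge> n / k - 1\<close>, with equality for the complement of a star.

  If equality holds although \<open>V - S\<close> contains an edge \<open>{A, B}\<close>, some \<open>Y \<in> S\<close> avoids \<open>A\<close> and
  \<open>B\<close>; placing \<open>A\<close> and \<open>B\<close> suitably on Katona's circle makes the Erdos--Ko--Rado bound at \<open>Y\<close>
  strict. So \<open>V - S\<close> is independent of size \<open>k / n * (n choose k)\<close>, the maximum by
  Erdos--Ko--Rado. The hypothesis on \<open>n\<close> is used only through \<open>n \<ge> 5k\<close>.\<close>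

section \<open>The Erdos--Ko--Rado theorem via Katona's circle\<close>

definition intersecting_family :: "'a set set \<Rightarrow> bool" where
  "intersecting_family F \<longleftrightarrow> (\<forall>X\<in>F. \<forall>Y\<in>F. X \<inter> Y \<noteq> {})"

definition cyclic_arc :: "nat \<Rightarrow> 'a list \<Rightarrow> nat \<Rightarrow> 'a set" where
  "cyclic_arc k xs i = (\<lambda>t. xs ! ((i + t) mod length xs)) ` {..<k}"

lemma cyclic_arc_rotate:
  assumes "xs \<noteq> []"
  shows "cyclic_arc k (rotate r xs) i = cyclic_arc k xs ((i + r) mod length xs)"
proof -
  have "rotate r xs ! ((i + t) mod length xs) = xs ! (((i + r) mod length xs + t) mod length xs)" for t
    using assms by (simp add: nth_rotate mod_add_left_eq mod_add_right_eq ac_simps)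
  then show ?thesis unfolding cyclic_arc_def by simp
qed

lemma cyclic_arc_subset: "xs \<noteq> [] \<Longrightarrow> cyclic_arc k xs i \<subseteq> set xs"
  unfolding cyclic_arc_def by auto

lemma cyclic_arc_0: "k \<le> length xs \<Longrightarrow> cyclic_arc k xs 0 = set (take k xs)"
  unfolding cyclic_arc_def using nth_image[of k xs] by (auto simp: atLeast0LessThan)

lemma mod_image_lessThan:
  fixes i k m :: nat
  assumes "i < m" "k \<le> m"
  shows "(\<lambda>t. (i + t) mod m) ` {..<k} = {p. p < m \<and> (i \<le> p \<and> p < i + k \<or> p + m < i + k)}"
proof (intro set_eqI iffI)
  fix p assume "p \<in> (\<lambda>t. (i + t) mod m) ` {..<k}"
  then obtain t where "t < k" "p = (i + t) mod m" by auto
  moreover have "(i + t) mod m = (if i + t < m then i + t else i + t - m)"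
    using assms \<open>t < k\<close> by (simp add: le_mod_geq)
  ultimately show "p \<in> {p. p < m \<and> (i \<le> p \<and> p < i + k \<or> p + m < i + k)}"
    using assms by auto
next
  fix p assume p: "p \<in> {p. p < m \<and> (i \<le> p \<and> p < i + k \<or> p + m < i + k)}"
  show "p \<in> (\<lambda>t. (i + t) mod m) ` {..<k}"
  proof (cases "i \<le> p \<and> p < i + k")
    case True
    then show ?thesis using p by (intro image_eqI[of _ _ "p - i"]) auto
  next
    case False
    then have "(i + (p + m - i)) mod m = p" "p + m - i < k" using p assms by auto
    then show ?thesis by (intro image_eqI[of _ _ "p + m - i"]) auto
  qed
qed

text \<open>Position \<open>p\<close> lies on the arc of length \<open>k\<close> starting at \<open>i\<close> iff \<open>p\<close> or
  \<open>p + length xs\<close> lies in \<open>[i, i + k)\<close>: this turns all reasoning about arcs into linear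
  arithmetic.\<close>
lemma nth_mem_cyclic_arc_iff:
  assumes "distinct xs" "p < length xs" "i < length xs" "k \<le> length xs"
  shows "xs ! p \<in> cyclic_arc k xs i \<longleftrightarrow> i \<le> p \<and> p < i + k \<or> p + length xs < i + k"
proof -
  have "cyclic_arc k xs i = (!) xs ` ((\<lambda>t. (i + t) mod length xs) ` {..<k})"
    unfolding cyclic_arc_def by (simp add: image_image)
  also have "\<dots> = (!) xs ` {q. q < length xs \<and> (i \<le> q \<and> q < i + k \<or> q + length xs < i + k)}"
    using assms by (simp add: mod_image_lessThan)
  finally show ?thesis
    using assms by (auto simp: nth_eq_iff_index_eq)
qed

lemma cyclic_arc_meets_nth:
  assumes "xs \<noteq> []" "cyclic_arc k xs i \<inter> Y \<noteq> {}"
  shows "\<exists>p < length xs. xs ! p \<in> cyclic_arc k xs i \<and> xs ! p \<in> Y"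
  using assms cyclic_arc_subset[OF assms(1), of k i] by (metis disjoint_iff in_set_conv_nth subsetD)

lemma cyclic_arcs_disjointI:
  assumes "distinct xs" "i < length xs" "j < length xs" "k \<le> length xs"
    and "\<And>p. p < length xs \<Longrightarrow> i \<le> p \<and> p < i + k \<or> p + length xs < i + k \<Longrightarrow>
            j \<le> p \<and> p < j + k \<or> p + length xs < j + k \<Longrightarrow> False"
  shows "cyclic_arc k xs i \<inter> cyclic_arc k xs j = {}"
proof (rule ccontr)
  assume "cyclic_arc k xs i \<inter> cyclic_arc k xs j \<noteq> {}"
  then obtain p where "p < length xs" "xs ! p \<in> cyclic_arc k xs i" "xs ! p \<in> cyclic_arc k xs j"
    using cyclic_arc_meets_nth assms(2) by (metis list.size(3) not_less_zero)
  then show False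
    using assms(5) nth_mem_cyclic_arc_iff[OF assms(1) _ assms(2,4)]
      nth_mem_cyclic_arc_iff[OF assms(1) _ assms(3,4)] by blast
qed

lemma card_le_if_no_pair_contained:
  assumes "I \<subseteq> (\<Union>j<k. {a j, b j})" "\<And>j. j < k \<Longrightarrow> \<not> (a j \<in> I \<and> b j \<in> I)"
  shows "card I \<le> k"
proof -
  have "card (I \<inter> {a j, b j}) \<le> 1" if "j < k" for j
    using assms(2)[OF that] card_le_Suc0_iff_eq[of "I \<inter> {a j, b j}"] by auto
  moreover have "I = (\<Union>j<k. I \<inter> {a j, b j})"
    using assms(1) by blast
  then have "card I \<le> (\<Sum>j<k. card (I \<inter> {a j, b j}))"
    by (metis card_UN_le finite_lessThan)
  ultimately show ?thesis
    using sum_mono[of "{..<k}" "\<lambda>j. card (I \<inter> {a j, b j})" "\<lambda>_. 1"] by simp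
qed

text \<open>If the arc at \<open>0\<close> belongs to the family, every other member starts
  within distance \<open>k\<close> of \<open>0\<close>, and of the disjoint arcs starting at \<open>j\<close> and \<open>m - k + j\<close> at most
  one is a member.\<close>
lemma katona_circle_bound_first_arc:
  assumes "distinct xs" "2 * k \<le> length xs" "intersecting_family F" "cyclic_arc k xs 0 \<in> F"
  shows "card {i \<in> {..<length xs}. cyclic_arc k xs i \<in> F} \<le> k"
proof -
  let ?m = "length xs"
  let ?I = "{i \<in> {..<?m}. cyclic_arc k xs i \<in> F}"
  have meet: "cyclic_arc k xs i \<inter> cyclic_arc k xs j \<noteq> {}" if "i \<in> ?I" "j \<in> ?I" for i j
    using assms(3) that unfolding intersecting_family_def by blast
  have "k \<noteq> 0"
    using assms(3,4) unfolding intersecting_family_def cyclic_arc_def by fastforce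
  then have "0 \<in> ?I"
    using assms(2,4) by (simp flip: length_greater_0_conv)
  have near_0: "i < k \<or> ?m - k < i" if "i \<in> ?I" for i
  proof (rule ccontr)
    assume "\<not> (i < k \<or> ?m - k < i)"
    then have "cyclic_arc k xs 0 \<inter> cyclic_arc k xs i = {}"
      using that assms(1,2) by (intro cyclic_arcs_disjointI) auto
    then show False
      using meet[OF \<open>0 \<in> ?I\<close> that] by blast
  qed
  have "?I \<subseteq> (\<Union>j<k. {j, ?m - k + j})"
  proof
    fix i assume i: "i \<in> ?I"
    show "i \<in> (\<Union>j<k. {j, ?m - k + j})"
    proof (cases "i < k")
      case False
      then have "i - (?m - k) < k" "i = ?m - k + (i - (?m - k))"
        using near_0[OF i] i by auto
      then show ?thesis
        by blast
    qed blast
  qed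
  moreover have "\<not> (j \<in> ?I \<and> ?m - k + j \<in> ?I)" if "j < k" for j
  proof -
    have "cyclic_arc k xs j \<inter> cyclic_arc k xs (?m - k + j) = {}"
      using that assms(1,2) by (intro cyclic_arcs_disjointI) auto
    then show ?thesis
      using meet by blast
  qed
  ultimately show ?thesis
    by (rule card_le_if_no_pair_contained)
qed

lemma katona_circle_bound:
  assumes "distinct xs" "2 * k \<le> length xs" "intersecting_family F"
  shows "card {i \<in> {..<length xs}. cyclic_arc k xs i \<in> F} \<le> k"
proof (cases "\<exists>r < length xs. cyclic_arc k xs r \<in> F")
  case False
  then have "{i \<in> {..<length xs}. cyclic_arc k xs i \<in> F} = {}"
    by auto
  then show ?thesis
    by (metis card.empty le0)
next
  case True
  then obtain r where r: "r < length xs" "cyclic_arc k xs r \<in> F" by blast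
  let ?m = "length xs"
  let ?ys = "rotate r xs"
  have arc_ys: "cyclic_arc k ?ys j = cyclic_arc k xs ((j + r) mod ?m)" for j
    using r(1) by (intro cyclic_arc_rotate) auto
  have "{i \<in> {..<?m}. cyclic_arc k xs i \<in> F}
      \<subseteq> (\<lambda>j. (j + r) mod ?m) ` {j \<in> {..<?m}. cyclic_arc k ?ys j \<in> F}"
  proof
    fix i assume i: "i \<in> {i \<in> {..<?m}. cyclic_arc k xs i \<in> F}"
    have "(i + (?m - r)) mod ?m < ?m"
      using r(1) by (intro mod_less_divisor) linarith
    moreover have "((i + (?m - r)) mod ?m + r) mod ?m = i"
      using i r(1) by (simp add: mod_add_left_eq)
    ultimately show "i \<in> (\<lambda>j. (j + r) mod ?m) ` {j \<in> {..<?m}. cyclic_arc k ?ys j \<in> F}"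
      using i r(1) by (intro image_eqI[of _ _ "(i + (?m - r)) mod ?m"]) (auto simp: arc_ys)
  qed
  then have "card {i \<in> {..<?m}. cyclic_arc k xs i \<in> F}
      \<le> card ((\<lambda>j. (j + r) mod ?m) ` {j \<in> {..<?m}. cyclic_arc k ?ys j \<in> F})"
    by (intro card_mono) auto
  also have "\<dots> \<le> card {j \<in> {..<?m}. cyclic_arc k ?ys j \<in> F}"
    by (intro card_image_le) auto
  also have "\<dots> \<le> k"
    using katona_circle_bound_first_arc[of ?ys k F] assms r by (simp add: arc_ys)
  finally show ?thesis .
qed

lemma card_permutations_take_eq:
  assumes "finite G" "X \<subseteq> G" "card X = k"
  shows "card {xs \<in> permutations_of_set G. set (take k xs) = X} = fact k * fact (card G - k)"
proof -
  let ?P = "permutations_of_set"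
  have "finite X"
    using assms finite_subset by blast
  have split: "{xs \<in> ?P G. set (take k xs) = X} = (\<lambda>(ys, zs). ys @ zs) ` (?P X \<times> ?P (G - X))"
  proof (intro equalityI subsetI)
    fix xs assume "xs \<in> {xs \<in> ?P G. set (take k xs) = X}"
    then have xs: "distinct xs" "set xs = G" "set (take k xs) = X"
      by (auto simp: permutations_of_set_def)
    moreover have "set (take k xs) \<union> set (drop k xs) = set xs"
      by (metis append_take_drop_id set_append)
    ultimately have "set (drop k xs) = G - X"
      using set_take_disj_set_drop_if_distinct[of xs k k] by auto
    then have "take k xs \<in> ?P X" "drop k xs \<in> ?P (G - X)"
      using xs by (auto simp: permutations_of_set_def)
    then show "xs \<in> (\<lambda>(ys, zs). ys @ zs) ` (?P X \<times> ?P (G - X))"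
      by (intro image_eqI[of _ _ "(take k xs, drop k xs)"]) auto
  next
    fix xs assume "xs \<in> (\<lambda>(ys, zs). ys @ zs) ` (?P X \<times> ?P (G - X))"
    then obtain ys zs where xs: "xs = ys @ zs" and ys: "ys \<in> ?P X" and zs: "zs \<in> ?P (G - X)"
      by auto
    have "length ys = k"
      using ys assms(3) distinct_card by (force simp: permutations_of_set_def)
    then show "xs \<in> {xs \<in> ?P G. set (take k xs) = X}"
      using ys zs assms(2) unfolding xs by (auto simp: permutations_of_set_def)
  qed
  have "inj_on (\<lambda>(ys, zs). ys @ zs) (?P X \<times> ?P (G - X))"
  proof (rule inj_onI, clarify)
    fix ys zs ys' zs'
    assume "ys \<in> ?P X" "zs \<in> ?P (G - X)" "ys' \<in> ?P X" "zs' \<in> ?P (G - X)"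
      and "ys @ zs = ys' @ zs'"
    then show "ys = ys' \<and> zs = zs'"
      using length_finite_permutations_of_set by (metis append_eq_append_conv)
  qed
  then show ?thesis
    using assms \<open>finite X\<close> unfolding split
    by (simp add: card_image card_cartesian_product card_Diff_subset)
qed

lemma card_permutations_cyclic_arc_eq:
  assumes "finite G" "X \<subseteq> G" "card X = k" "i < card G"
  shows "card {xs \<in> permutations_of_set G. cyclic_arc k xs i = X} = fact k * fact (card G - k)"
proof -
  let ?P = "permutations_of_set G"
  let ?m = "card G"
  have len: "length xs = ?m" if "xs \<in> ?P" for xs
    using length_finite_permutations_of_set that by blast
  have "k \<le> ?m"
    using assms(1-3) card_mono by blast
  have arc_i: "cyclic_arc k xs i = set (take k (rotate i xs))" if "xs \<in> ?P" for xs
  proof -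
    have "xs \<noteq> []"
      using len[OF that] assms(4) by auto
    then show ?thesis
      using cyclic_arc_rotate[of xs k i 0] cyclic_arc_0[of k "rotate i xs"] len[OF that] \<open>k \<le> ?m\<close>
        assms(4) by simp
  qed
  have "bij_betw (rotate i) {xs \<in> ?P. cyclic_arc k xs i = X} {xs \<in> ?P. set (take k xs) = X}"
  proof (rule bij_betw_byWitness[where f' = "rotate (?m - i)"])
    show "\<forall>xs\<in>{xs \<in> ?P. cyclic_arc k xs i = X}. rotate (?m - i) (rotate i xs) = xs"
      "\<forall>xs\<in>{xs \<in> ?P. set (take k xs) = X}. rotate i (rotate (?m - i) xs) = xs"
      using len assms(4) by (auto simp: rotate_rotate)
    show "rotate i ` {xs \<in> ?P. cyclic_arc k xs i = X} \<subseteq> {xs \<in> ?P. set (take k xs) = X}"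
      using arc_i by (auto simp: permutations_of_set_def)
    show "rotate (?m - i) ` {xs \<in> ?P. set (take k xs) = X} \<subseteq> {xs \<in> ?P. cyclic_arc k xs i = X}"
    proof (rule image_subsetI)
      fix xs assume xs: "xs \<in> {xs \<in> ?P. set (take k xs) = X}"
      then have "rotate (?m - i) xs \<in> ?P"
        by (auto simp: permutations_of_set_def)
      moreover have "rotate i (rotate (?m - i) xs) = xs"
        using xs len assms(4) by (auto simp: rotate_rotate)
      ultimately show "rotate (?m - i) xs \<in> {xs \<in> ?P. cyclic_arc k xs i = X}"
        using arc_i xs by auto
    qed
  qed
  then show ?thesis
    using bij_betw_same_card card_permutations_take_eq[OF assms(1-3)] by fastforce
qed

lemma sum_card_cyclic_arcs_in_family:
  assumes "finite G" "F \<subseteq> {X. X \<subseteq> G \<and> card X = k}"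
  shows "(\<Sum>xs\<in>permutations_of_set G. card {i \<in> {..<card G}. cyclic_arc k xs i \<in> F})
    = card G * card F * (fact k * fact (card G - k))"
proof -
  let ?P = "permutations_of_set G"
  have "finite F"
    using assms finite_subset[of F "Pow G"] by auto
  have "card {xs \<in> ?P. cyclic_arc k xs i \<in> F} = card F * (fact k * fact (card G - k))"
    if "i < card G" for i
  proof -
    have "{xs \<in> ?P. cyclic_arc k xs i \<in> F} = (\<Union>X\<in>F. {xs \<in> ?P. cyclic_arc k xs i = X})"
      by auto
    also have "card \<dots> = (\<Sum>X\<in>F. card {xs \<in> ?P. cyclic_arc k xs i = X})"
      using \<open>finite F\<close> by (intro card_UN_disjoint) auto
    also have "\<dots> = (\<Sum>X\<in>F. fact k * fact (card G - k))"
      using assms that by (intro sum.cong card_permutations_cyclic_arc_eq) auto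
    finally show ?thesis
      by simp
  qed
  then show ?thesis
    using assms(1) by (subst sum_multicount_gen) auto
qed

text \<open>Katona's proof: average the circle bound over all cyclic orders of \<open>G\<close>.\<close>
theorem erdos_ko_rado:
  assumes "finite G" "F \<subseteq> {X. X \<subseteq> G \<and> card X = k}" "intersecting_family F" "2 * k \<le> card G"
  shows "card F * card G \<le> k * (card G choose k)"
proof -
  let ?m = "card G"
  define c :: nat where "c = fact k * fact (?m - k)"
  have "card F * ?m * c = (\<Sum>xs\<in>permutations_of_set G. card {i \<in> {..<?m}. cyclic_arc k xs i \<in> F})"
    using sum_card_cyclic_arcs_in_family[OF assms(1,2)] unfolding c_def by simp
  also have "\<dots> \<le> (\<Sum>xs\<in>permutations_of_set G. k)"
    using katona_circle_bound[OF permutations_of_setD(2) _ assms(3)] assms(4)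
      length_finite_permutations_of_set by (intro sum_mono) fastforce
  also have "\<dots> = k * (?m choose k) * c"
    using assms(1,4) binomial_fact_lemma[of k ?m] unfolding c_def by (simp add: ac_simps)
  finally have "card F * ?m * c \<le> k * (?m choose k) * c" .
  moreover have "0 < c"
    unfolding c_def by simp
  ultimately show ?thesis
    by simp
qed

lemma nth_append_mem_set_iff:
  assumes "distinct (ys @ zs)" "p < length (ys @ zs)"
  shows "(ys @ zs) ! p \<in> set ys \<longleftrightarrow> p < length ys"
  using assms by (auto simp: nth_append dest: nth_mem[of "p - length ys" zs])

lemma nth_append_mem_middle_iff:
  assumes "distinct (xs @ ys @ zs)" "p < length (xs @ ys @ zs)"
  shows "(xs @ ys @ zs) ! p \<in> set ys \<longleftrightarrow> length xs \<le> p \<and> p < length xs + length ys"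
proof (cases "p < length xs")
  case True
  then show ?thesis
    using nth_append_mem_set_iff[OF assms] assms(1) by auto
next
  case False
  then have "(xs @ ys @ zs) ! p = (ys @ zs) ! (p - length xs)"
    by (simp add: nth_append)
  then show ?thesis
    using False nth_append_mem_set_iff[of ys zs "p - length xs"] assms by auto
qed

lemma exists_permutation_with_blocks:
  assumes "finite G" "3 * k \<le> card G" "A \<subseteq> G" "B \<subseteq> G" "card A = k" "card B = k" "A \<inter> B = {}"
  shows "\<exists>xs\<in>permutations_of_set G.
    \<forall>p < card G. (xs ! p \<in> A \<longleftrightarrow> p < k) \<and> (xs ! p \<in> B \<longleftrightarrow> 2 * k \<le> p \<and> p < 3 * k)"
proof -
  have fin: "finite A" "finite B"
    using assms(1,3,4) finite_subset by auto
  have "card (G - (A \<union> B)) = card G - 2 * k"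
    using assms fin by (simp add: card_Diff_subset card_Un_disjoint)
  then have "k \<le> card (G - (A \<union> B))"
    using assms(2) by linarith
  then obtain C where C: "C \<subseteq> G - (A \<union> B)" "card C = k"
    by (meson obtain_subset_with_card_n)
  have "finite C"
    using C(1) assms(1) finite_subset by blast
  obtain as where as: "distinct as" "set as = A"
    using finite_distinct_list[OF fin(1)] by blast
  obtain bs where bs: "distinct bs" "set bs = B"
    using finite_distinct_list[OF fin(2)] by blast
  obtain cs where cs: "distinct cs" "set cs = C"
    using finite_distinct_list[OF \<open>finite C\<close>] by blast
  obtain ds where ds: "distinct ds" "set ds = G - (A \<union> B \<union> C)"
    using finite_distinct_list[of "G - (A \<union> B \<union> C)"] assms(1) by blast
  have len: "length as = k" "length bs = k" "length cs = k"
    using as bs cs assms(5,6) C(2) distinct_card by metis+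
  define xs where "xs = as @ cs @ bs @ ds"
  have xs: "xs \<in> permutations_of_set G"
    using as bs cs ds C(1) assms(3,4,7) by (auto simp: xs_def permutations_of_set_def)
  then have dxs: "distinct xs" and mxs: "length xs = card G"
    using length_finite_permutations_of_set[OF xs] by (auto simp: permutations_of_set_def)
  have "xs ! p \<in> A \<longleftrightarrow> p < k" if "p < card G" for p
    using nth_append_mem_set_iff[of as "cs @ bs @ ds" p] dxs mxs that as len by (simp add: xs_def)
  moreover have "xs ! p \<in> B \<longleftrightarrow> 2 * k \<le> p \<and> p < 3 * k" if "p < card G" for p
    using nth_append_mem_middle_iff[of "as @ cs" bs ds p] dxs mxs that bs len by (simp add: xs_def) arith
  ultimately show ?thesis
    using xs by blast
qed

text \<open>If \<open>A\<close> occupies positions \<open>[0, k)\<close> and \<open>B\<close> positions \<open>[2k, 3k)\<close> of a cyclic order of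
  length at least \<open>4k\<close>, no arc of length \<open>k\<close> meets both \<open>A\<close> and \<open>B\<close>.\<close>
lemma cyclic_arcs_in_family_subset_0:
  assumes "xs \<in> permutations_of_set G" "4 * k \<le> card G" "1 \<le> k"
    and "\<forall>p < card G. (xs ! p \<in> A \<longleftrightarrow> p < k) \<and> (xs ! p \<in> B \<longleftrightarrow> 2 * k \<le> p \<and> p < 3 * k)"
    and "\<forall>X\<in>F - {A}. X \<inter> A \<noteq> {} \<and> X \<inter> B \<noteq> {}"
  shows "{i \<in> {..<card G}. cyclic_arc k xs i \<in> F} \<subseteq> {0}"
proof -
  let ?m = "card G"
  have dxs: "distinct xs" and mxs: "length xs = ?m" and sxs: "set xs = G"
    using assms(1) length_finite_permutations_of_set[OF assms(1)]
    by (auto simp: permutations_of_set_def)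
  have on_arc: "xs ! p \<in> cyclic_arc k xs i \<longleftrightarrow> i \<le> p \<and> p < i + k \<or> p + ?m < i + k"
    if "p < ?m" "i < ?m" for p i
    using nth_mem_cyclic_arc_iff[OF dxs] that mxs assms(2) by simp
  have "i = 0" if i: "i < ?m" and iF: "cyclic_arc k xs i \<in> F" for i
  proof (cases "cyclic_arc k xs i = A")
    case True
    then have "xs ! i \<in> A"
      using on_arc[OF i i] assms(3) by auto
    then have "i < k"
      using assms(4) i by blast
    then have "i + k - 1 < ?m"
      using assms(2) by linarith
    then have "xs ! (i + k - 1) \<in> A"
      using True on_arc[of "i + k - 1" i] i assms(3) by auto
    then have "i + k - 1 < k"
      using assms(4) \<open>i + k - 1 < ?m\<close> by blast
    then show ?thesis
      by linarith
  next
    case False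
    then have "cyclic_arc k xs i \<inter> A \<noteq> {}" "cyclic_arc k xs i \<inter> B \<noteq> {}"
      using assms(5) iF by blast+
    then obtain p q where "p < ?m" "q < ?m" "xs ! p \<in> cyclic_arc k xs i" "xs ! p \<in> A"
      "xs ! q \<in> cyclic_arc k xs i" "xs ! q \<in> B"
      using cyclic_arc_meets_nth[of xs k i] i mxs by (metis list.size(3) not_less_zero)
    then show ?thesis
      using on_arc[of p i] on_arc[of q i] assms(2,4) i by auto
  qed
  then show ?thesis
    by auto
qed

theorem erdos_ko_rado_strict:
  assumes "finite G" "F \<subseteq> {X. X \<subseteq> G \<and> card X = k}" "intersecting_family F"
    and "4 * k \<le> card G" "2 \<le> k"
    and "A \<in> F" "B \<subseteq> G" "card B = k" "A \<inter> B = {}" "\<forall>X\<in>F - {A}. X \<inter> B \<noteq> {}"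
  shows "card F * card G < k * (card G choose k)"
proof -
  let ?m = "card G"
  obtain ys where ys: "ys \<in> permutations_of_set G"
    "\<forall>p < ?m. (ys ! p \<in> A \<longleftrightarrow> p < k) \<and> (ys ! p \<in> B \<longleftrightarrow> 2 * k \<le> p \<and> p < 3 * k)"
    using exists_permutation_with_blocks[of G k A B] assms by auto
  have "\<forall>X\<in>F - {A}. X \<inter> A \<noteq> {} \<and> X \<inter> B \<noteq> {}"
    using assms(3,6,10) unfolding intersecting_family_def by blast
  then have "{i \<in> {..<?m}. cyclic_arc k ys i \<in> F} \<subseteq> {0}"
    using cyclic_arcs_in_family_subset_0[OF ys(1) assms(4) _ ys(2)] assms(5) by simp
  define c :: nat where "c = fact k * fact (?m - k)"
  have "card F * ?m * c = (\<Sum>xs\<in>permutations_of_set G. card {i \<in> {..<?m}. cyclic_arc k xs i \<in> F})"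
    using sum_card_cyclic_arcs_in_family[OF assms(1,2)] unfolding c_def by simp
  also have "\<dots> < (\<Sum>xs\<in>permutations_of_set G. k)"
  proof (rule sum_strict_mono_ex1)
    show "\<forall>xs\<in>permutations_of_set G. card {i \<in> {..<?m}. cyclic_arc k xs i \<in> F} \<le> k"
      using katona_circle_bound[OF permutations_of_setD(2) _ assms(3)] assms(4)
        length_finite_permutations_of_set by fastforce
    show "\<exists>xs\<in>permutations_of_set G. card {i \<in> {..<?m}. cyclic_arc k xs i \<in> F} < k"
      using assms(5) card_mono[OF _ \<open>{i \<in> {..<?m}. cyclic_arc k ys i \<in> F} \<subseteq> {0}\<close>]
      by (intro bexI[OF _ ys(1)]) auto
  qed simp
  also have "\<dots> = k * (?m choose k) * c"
    using assms(1,4) binomial_fact_lemma[of k ?m] unfolding c_def by (simp add: ac_simps)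
  finally have "card F * ?m * c < k * (?m choose k) * c" .
  then show ?thesis
    by simp
qed

definition component_of :: "'a set \<Rightarrow> ('a \<Rightarrow> 'a \<Rightarrow> bool) \<Rightarrow> 'a \<Rightarrow> 'a set" where
  "component_of W E x = {y \<in> W. reach W E x y}"

lemma components_eq_image: "components W E = component_of W E ` W"
  unfolding components_def component_of_def by auto

lemma reach_sym:
  assumes "symp E" "reach W E x y"
  shows "reach W E y x"
proof -
  have "symp (\<lambda>a b. a \<in> W \<and> b \<in> W \<and> E a b)"
    using assms(1) by (auto simp: symp_def)
  then show ?thesis
    using assms(2) symp_rtranclp unfolding reach_def by (metis sympD)
qed

lemma reach_trans: "reach W E x y \<Longrightarrow> reach W E y z \<Longrightarrow> reach W E x z"
  unfolding reach_def by (rule rtranclp_trans)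

lemma component_of_self: "x \<in> W \<Longrightarrow> x \<in> component_of W E x"
  unfolding component_of_def reach_def by simp

lemma component_of_in_components: "x \<in> W \<Longrightarrow> component_of W E x \<in> components W E"
  unfolding components_eq_image by simp

lemma component_subset: "C \<in> components W E \<Longrightarrow> C \<subseteq> W"
  unfolding components_def by auto

lemma component_nonempty: "C \<in> components W E \<Longrightarrow> C \<noteq> {}"
  unfolding components_eq_image using component_of_self by fastforce

lemma finite_components: "finite W \<Longrightarrow> finite (components W E)"
  unfolding components_eq_image by simp

lemma component_of_eq:
  assumes "symp E" "reach W E y z"
  shows "component_of W E y = component_of W E z"
proof -
  have "reach W E y w \<longleftrightarrow> reach W E z w" for w
    using reach_trans[OF reach_sym[OF assms], of w] reach_trans[OF assms(2), of w] by blast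
  then show ?thesis
    unfolding component_of_def by simp
qed

lemma components_disjoint:
  assumes "symp E" "C \<in> components W E" "D \<in> components W E" "x \<in> C" "x \<in> D"
  shows "C = D"
proof -
  obtain y z where CD: "C = component_of W E y" "D = component_of W E z"
    using assms(2,3) unfolding components_eq_image by blast
  then have "reach W E y x" "reach W E z x"
    using assms(4,5) unfolding component_of_def by auto
  then have "reach W E y z"
    using reach_trans reach_sym[OF assms(1)] by meson
  then show ?thesis
    using component_of_eq[OF assms(1)] CD by simp
qed

lemma component_closed:
  assumes "C \<in> components W E" "x \<in> C" "y \<in> W" "E x y"
  shows "y \<in> C"
  using assms unfolding components_def reach_def
  by (auto intro: rtranclp.rtrancl_into_rtrancl)

lemma components_no_edge:
  assumes "symp E" "C \<in> components W E" "D \<in> components W E" "C \<noteq> D" "x \<in> C" "y \<in> D"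
  shows "\<not> E x y"
  using component_closed[OF assms(2,5)] components_disjoint[OF assms(1-3) _ assms(6)] assms(3,4,6)
    component_subset by blast

lemma num_components_edgeless:
  assumes "\<forall>x\<in>W. \<forall>y\<in>W. \<not> E x y"
  shows "num_components W E = card W"
proof -
  have "reach W E x y \<Longrightarrow> x = y" for x y
    unfolding reach_def by (induction rule: rtranclp_induct) (use assms in auto)
  then have "component_of W E x = {x}" if "x \<in> W" for x
    using that component_of_self[of x W E] unfolding component_of_def by blast
  then have "components W E = (\<lambda>x. {x}) ` W"
    unfolding components_eq_image by simp
  then show ?thesis
    unfolding num_components_def by (simp add: card_image)
qed

section \<open>Fragments and atoms\<close>

definition nbhd :: "'a set \<Rightarrow> ('a \<Rightarrow> 'a \<Rightarrow> bool) \<Rightarrow> 'a set \<Rightarrow> 'a set" where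
  "nbhd V E C = {y \<in> V. y \<notin> C \<and> (\<exists>x\<in>C. E x y)}"

definition exterior :: "'a set \<Rightarrow> ('a \<Rightarrow> 'a \<Rightarrow> bool) \<Rightarrow> 'a set \<Rightarrow> 'a set" where
  "exterior V E C = V - C - nbhd V E C"

definition separated :: "'a set \<Rightarrow> ('a \<Rightarrow> 'a \<Rightarrow> bool) \<Rightarrow> 'a set \<Rightarrow> bool" where
  "separated V E C \<longleftrightarrow> C \<subseteq> V \<and> C \<noteq> {} \<and> exterior V E C \<noteq> {}"

text \<open>Fragments and atoms in the sense of Mader and Watkins: a fragment is a separated set whose
  neighbourhood is a minimum vertex cut, an atom is a fragment of minimum size.\<close>
definition fragment :: "'a set \<Rightarrow> ('a \<Rightarrow> 'a \<Rightarrow> bool) \<Rightarrow> 'a set \<Rightarrow> bool" where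
  "fragment V E C \<longleftrightarrow> separated V E C \<and>
     (\<forall>D. separated V E D \<longrightarrow> card (nbhd V E C) \<le> card (nbhd V E D))"

definition atom :: "'a set \<Rightarrow> ('a \<Rightarrow> 'a \<Rightarrow> bool) \<Rightarrow> 'a set \<Rightarrow> bool" where
  "atom V E A \<longleftrightarrow> fragment V E A \<and> (\<forall>D. fragment V E D \<longrightarrow> card A \<le> card D)"

lemma exists_atom:
  assumes "separated V E C"
  shows "\<exists>A. atom V E A"
proof -
  obtain D where D: "separated V E D" "\<forall>D'. separated V E D' \<longrightarrow> card (nbhd V E D) \<le> card (nbhd V E D')"
    using ex_has_least_nat[of "separated V E" C "\<lambda>D. card (nbhd V E D)"] assms by blast
  then have "fragment V E D"
    unfolding fragment_def by blast
  then show ?thesis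
    using ex_has_least_nat[of "fragment V E" D card] unfolding atom_def by blast
qed

lemma exterior_antimono: "C \<subseteq> D \<Longrightarrow> exterior V E D \<subseteq> exterior V E C"
  unfolding exterior_def nbhd_def by auto

lemma subset_exterior_exterior: "symp E \<Longrightarrow> C \<subseteq> V \<Longrightarrow> C \<subseteq> exterior V E (exterior V E C)"
  unfolding exterior_def nbhd_def by (auto dest: sympD)

lemma nbhd_exterior_subset: "symp E \<Longrightarrow> nbhd V E (exterior V E C) \<subseteq> nbhd V E C"
  unfolding exterior_def nbhd_def by (auto dest: sympD)

lemma separated_exterior:
  assumes "symp E" "separated V E C"
  shows "separated V E (exterior V E C)"
proof -
  have "C \<subseteq> exterior V E (exterior V E C)" "exterior V E C \<subseteq> V"
    using subset_exterior_exterior[OF assms(1)] assms(2) unfolding separated_def exterior_def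
    by blast+
  then show ?thesis
    using assms(2) unfolding separated_def by blast
qed

lemma fragment_exterior:
  assumes "symp E" "finite V" "fragment V E C"
  shows "fragment V E (exterior V E C)"
proof -
  have "card (nbhd V E (exterior V E C)) \<le> card (nbhd V E C)"
    using nbhd_exterior_subset[OF assms(1)] assms(2) by (intro card_mono) (auto simp: nbhd_def)
  then show ?thesis
    using assms(3) separated_exterior[OF assms(1)] unfolding fragment_def by (meson le_trans)
qed

lemma nbhd_Int_subset:
  "nbhd V E (A \<inter> X) \<subseteq> (A \<inter> nbhd V E X) \<union> (nbhd V E A \<inter> nbhd V E X) \<union> (nbhd V E A \<inter> X)"
  unfolding nbhd_def by auto

lemma card_nbhd_submodular:
  fixes A X :: "'a set"
  assumes "finite V" "symp E"
  defines "N \<equiv> nbhd V E" and "Ext \<equiv> exterior V E"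
  shows "card (N (A \<inter> X)) + card (N (Ext A \<inter> Ext X)) \<le> card (N A) + card (N X)"
proof -
  let ?P = "(A \<inter> N X) \<union> (N A \<inter> N X) \<union> (N A \<inter> X)"
  let ?Q = "(Ext A \<inter> N X) \<union> (N A \<inter> N X) \<union> (N A \<inter> Ext X)"
  have fin: "finite (N C)" for C
    using assms(1) unfolding N_def nbhd_def by simp
  have "N (Ext A \<inter> Ext X) \<subseteq> (Ext A \<inter> N (Ext X)) \<union> (N (Ext A) \<inter> N (Ext X)) \<union> (N (Ext A) \<inter> Ext X)"
    unfolding N_def by (rule nbhd_Int_subset)
  also have "\<dots> \<subseteq> ?Q"
    using nbhd_exterior_subset[OF assms(2)] unfolding N_def Ext_def by blast
  finally have "card (N (Ext A \<inter> Ext X)) \<le> card ?Q"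
    using fin by (intro card_mono) auto
  moreover have "N (A \<inter> X) \<subseteq> ?P"
    unfolding N_def by (rule nbhd_Int_subset)
  then have "card (N (A \<inter> X)) \<le> card ?P"
    using fin by (intro card_mono) auto
  moreover have "card ?P + card ?Q = card (?P \<union> ?Q) + card (?P \<inter> ?Q)"
    using fin by (intro card_Un_Int) auto
  moreover have "card (?P \<union> ?Q) \<le> card (N A \<union> N X)" "card (?P \<inter> ?Q) \<le> card (N A \<inter> N X)"
    using fin by (intro card_mono; auto simp: N_def Ext_def exterior_def nbhd_def)+
  moreover have "card (N A \<union> N X) + card (N A \<inter> N X) = card (N A) + card (N X)"
    using fin by (intro card_Un_Int[symmetric]) auto
  ultimately show ?thesis
    by linarith
qed

lemma card_split_by_nbhd:
  assumes "finite V" "S \<subseteq> V"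
  shows "card S = card (S \<inter> C) + card (S \<inter> nbhd V E C) + card (S \<inter> exterior V E C)"
proof -
  have "finite S"
    using assms finite_subset by auto
  have "S = ((S \<inter> C) \<union> (S \<inter> nbhd V E C)) \<union> (S \<inter> exterior V E C)"
    using assms(2) unfolding exterior_def by auto
  also have "card \<dots> = card (S \<inter> C) + card (S \<inter> nbhd V E C) + card (S \<inter> exterior V E C)"
    using \<open>finite S\<close> by (subst card_Un_disjoint; auto simp: exterior_def nbhd_def card_Un_disjoint)+
  finally show ?thesis .
qed

lemma card_nbhd_Int_less:
  fixes A X :: "'a set" and E :: "'a \<Rightarrow> 'a \<Rightarrow> bool"
  assumes "finite V" "A \<subseteq> V" "X \<subseteq> V" "A \<inter> X \<noteq> {}"
  defines "N \<equiv> nbhd V E" and "Ext \<equiv> exterior V E"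
  assumes "Ext A \<inter> Ext X = {}" "card A \<le> card (Ext X)"
  shows "card (N (A \<inter> X)) < card (N A)"
proof -
  have fin: "finite (N C)" "N C \<subseteq> V" "Ext C \<subseteq> V" for C
    using assms(1) unfolding N_def Ext_def nbhd_def exterior_def by auto
  have "card (N (A \<inter> X)) \<le> card (A \<inter> N X) + card (N A \<inter> N X) + card (N A \<inter> X)"
    using card_mono[OF _ nbhd_Int_subset] card_Un_le fin unfolding N_def
    by (smt (verit, ccfv_threshold) finite_Int finite_UnI le_trans add_le_mono1)
  moreover have "card A = card (A \<inter> X) + card (A \<inter> N X) + card (A \<inter> Ext X)"
    "card (N A) = card (N A \<inter> X) + card (N A \<inter> N X) + card (N A \<inter> Ext X)"
    using card_split_by_nbhd[OF assms(1)] assms(2) fin unfolding N_def Ext_def by auto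
  moreover have "card (Ext X) = card (Ext X \<inter> A) + card (Ext X \<inter> N A)"
    using card_split_by_nbhd[OF assms(1) fin(3)[of X], of A E] assms(7) unfolding N_def Ext_def
    by (simp add: Int_commute)
  moreover have "0 < card (A \<inter> X)"
    using assms(1,2,4) finite_subset by fastforce
  ultimately show ?thesis
    using assms(8) by (simp add: Int_commute)
qed

lemma separated_Int: "separated V E A \<Longrightarrow> A \<inter> X \<noteq> {} \<Longrightarrow> separated V E (A \<inter> X)"
  using exterior_antimono[of "A \<inter> X" A V E] unfolding separated_def by blast

lemma fragment_Int:
  assumes "finite V" "symp E" "fragment V E A" "fragment V E X" "A \<inter> X \<noteq> {}"
    and "exterior V E A \<inter> exterior V E X \<noteq> {}"
  shows "fragment V E (A \<inter> X)"
proof -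
  let ?N = "nbhd V E" and ?Ext = "exterior V E"
  have A: "separated V E A" "\<forall>D. separated V E D \<longrightarrow> card (?N A) \<le> card (?N D)"
    and X: "separated V E X" "\<forall>D. separated V E D \<longrightarrow> card (?N X) \<le> card (?N D)"
    using assms(3,4) unfolding fragment_def by auto
  have "A \<subseteq> ?Ext (?Ext A \<inter> ?Ext X)"
    using subset_exterior_exterior[OF assms(2)] exterior_antimono A(1)
    unfolding separated_def by (metis Int_lower1 subset_trans)
  then have "separated V E (?Ext A \<inter> ?Ext X)"
    using assms(6) A(1) unfolding separated_def exterior_def by blast
  then have "card (?N A) \<le> card (?N (?Ext A \<inter> ?Ext X))" "card (?N A) = card (?N X)"
    using A X by (auto intro: le_antisym)
  then have "card (?N (A \<inter> X)) \<le> card (?N A)"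
    using card_nbhd_submodular[OF assms(1,2), of A X] by linarith
  then show ?thesis
    using separated_Int[OF A(1) assms(5)] A(2) unfolding fragment_def by fastforce
qed

theorem atom_subset_fragment:
  assumes "finite V" "symp E" "atom V E A" "fragment V E X" "A \<inter> X \<noteq> {}"
  shows "A \<subseteq> X"
proof (cases "exterior V E A \<inter> exterior V E X = {}")
  case True
  have A: "fragment V E A" "\<forall>D. fragment V E D \<longrightarrow> card A \<le> card D"
    using assms(3) unfolding atom_def by auto
  then have "card A \<le> card (exterior V E X)"
    using fragment_exterior[OF assms(2,1,4)] by blast
  then have "card (nbhd V E (A \<inter> X)) < card (nbhd V E A)"
    using card_nbhd_Int_less[OF assms(1) _ _ assms(5) True] A(1) assms(4)
    unfolding fragment_def separated_def by blast
  moreover have "card (nbhd V E A) \<le> card (nbhd V E (A \<inter> X))"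
    using A(1) separated_Int assms(5) unfolding fragment_def by blast
  ultimately show ?thesis
    by linarith
next
  case False
  then have "card A \<le> card (A \<inter> X)"
    using fragment_Int[OF assms(1,2) _ assms(4,5)] assms(3) unfolding atom_def by blast
  then show ?thesis
    using assms(1,3) card_seteq[of A "A \<inter> X"] finite_subset
    unfolding atom_def fragment_def separated_def by blast
qed

definition graph_automorphism :: "'a set \<Rightarrow> ('a \<Rightarrow> 'a \<Rightarrow> bool) \<Rightarrow> ('a \<Rightarrow> 'a) \<Rightarrow> bool" where
  "graph_automorphism V E \<phi> \<longleftrightarrow> bij_betw \<phi> V V \<and> (\<forall>x\<in>V. \<forall>y\<in>V. E (\<phi> x) (\<phi> y) \<longleftrightarrow> E x y)"

lemma nbhd_image:
  assumes "graph_automorphism V E \<phi>" "C \<subseteq> V"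
  shows "nbhd V E (\<phi> ` C) = \<phi> ` nbhd V E C"
proof -
  have inj: "inj_on \<phi> V" and im: "\<phi> ` V = V" and adj: "\<And>x y. x \<in> V \<Longrightarrow> y \<in> V \<Longrightarrow> E (\<phi> x) (\<phi> y) \<longleftrightarrow> E x y"
    using assms(1) unfolding graph_automorphism_def bij_betw_def by auto
  have "nbhd V E (\<phi> ` C) = {y \<in> \<phi> ` V. y \<notin> \<phi> ` C \<and> (\<exists>x\<in>C. E (\<phi> x) y)}"
    unfolding nbhd_def using im by simp
  also have "\<dots> = \<phi> ` {z \<in> V. \<phi> z \<notin> \<phi> ` C \<and> (\<exists>x\<in>C. E (\<phi> x) (\<phi> z))}"
    by (auto simp: image_iff)
  also have "\<dots> = \<phi> ` nbhd V E C"
    using assms(2) inj adj[OF subsetD[OF assms(2)]] unfolding nbhd_def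
    by (auto simp: inj_on_image_mem_iff)
  finally show ?thesis .
qed

lemma exterior_image:
  assumes "graph_automorphism V E \<phi>" "C \<subseteq> V"
  shows "exterior V E (\<phi> ` C) = \<phi> ` exterior V E C"
proof -
  have inj: "inj_on \<phi> V" and im: "\<phi> ` V = V"
    using assms(1) unfolding graph_automorphism_def bij_betw_def by auto
  have "nbhd V E C \<subseteq> V"
    unfolding nbhd_def by auto
  then have "\<phi> ` (V - C - nbhd V E C) = \<phi> ` V - \<phi> ` C - \<phi> ` nbhd V E C"
    using assms(2) inj_on_image_set_diff[OF inj] by (metis Diff_subset order_trans)
  then show ?thesis
    using assms im unfolding exterior_def by (simp add: nbhd_image)
qed

lemma atom_image_eq:
  assumes "finite V" "symp E" "graph_automorphism V E \<phi>" "atom V E A" "A \<inter> \<phi> ` A \<noteq> {}"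
  shows "\<phi> ` A = A"
proof -
  have inj: "inj_on \<phi> V" and im: "\<phi> ` V = V"
    using assms(3) unfolding graph_automorphism_def bij_betw_def by auto
  have A: "separated V E A" "\<forall>D. separated V E D \<longrightarrow> card (nbhd V E A) \<le> card (nbhd V E D)"
    using assms(4) unfolding atom_def fragment_def by auto
  then have AV: "A \<subseteq> V" and "nbhd V E A \<subseteq> V"
    unfolding separated_def nbhd_def by auto
  then have card_eq: "card (\<phi> ` A) = card A" "card (nbhd V E (\<phi> ` A)) = card (nbhd V E A)"
    using nbhd_image[OF assms(3)] inj by (auto simp: card_image inj_on_subset)
  have "separated V E (\<phi> ` A)"
    using A(1) AV im exterior_image[OF assms(3) AV] unfolding separated_def by auto
  then have "fragment V E (\<phi> ` A)"
    using A(2) card_eq unfolding fragment_def by simp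
  then have "A \<subseteq> \<phi> ` A"
    using atom_subset_fragment assms by blast
  then show ?thesis
    using card_seteq[of "\<phi> ` A" A] finite_subset[OF AV assms(1)] card_eq by simp
qed

lemma exists_other_component:
  assumes "2 \<le> num_components W E" "C \<in> components W E"
  shows "\<exists>D\<in>components W E. D \<noteq> C"
proof (rule ccontr)
  assume "\<not> ?thesis"
  then have "components W E \<subseteq> {C}"
    by blast
  then show False
    using assms card_mono[of "{C}" "components W E"] unfolding num_components_def by simp
qed

lemma nbhd_component_subset:
  assumes "C \<in> components (V - S) E"
  shows "nbhd V E C \<subseteq> S"
  using component_closed[OF assms] unfolding nbhd_def by blast

lemma separated_component:
  assumes "symp E" "2 \<le> num_components (V - S) E" "C \<in> components (V - S) E"
  shows "separated V E C"
proof -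
  obtain D where D: "D \<in> components (V - S) E" "D \<noteq> C"
    using exists_other_component[OF assms(2,3)] by blast
  then obtain x where x: "x \<in> D"
    using component_nonempty by blast
  then have "x \<in> V - S" "x \<notin> C"
    using D component_subset components_disjoint[OF assms(1) assms(3) D(1)] by blast+
  then have "x \<in> exterior V E C"
    using component_closed[OF assms(3)] unfolding exterior_def nbhd_def by blast
  then show ?thesis
    using assms(3) component_subset component_nonempty unfolding separated_def by blast
qed

definition adjacent_components :: "'a set \<Rightarrow> ('a \<Rightarrow> 'a \<Rightarrow> bool) \<Rightarrow> 'a set \<Rightarrow> 'a \<Rightarrow> 'a set set" where
  "adjacent_components V E S Y = {C \<in> components (V - S) E. Y \<in> nbhd V E C}"

lemma sum_card_nbhd_components:
  assumes "finite V" "S \<subseteq> V"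
  shows "(\<Sum>C\<in>components (V - S) E. card (nbhd V E C)) = (\<Sum>Y\<in>S. card (adjacent_components V E S Y))"
proof -
  have "nbhd V E C = {Y \<in> S. Y \<in> nbhd V E C}" if "C \<in> components (V - S) E" for C
    using nbhd_component_subset[OF that] by blast
  then have "(\<Sum>C\<in>components (V - S) E. card (nbhd V E C))
      = (\<Sum>C\<in>components (V - S) E. card {Y \<in> S. Y \<in> nbhd V E C})"
    by (intro sum.cong) auto
  also have "\<dots> = (\<Sum>Y\<in>S. card (adjacent_components V E S Y))"
    unfolding adjacent_components_def using assms finite_subset
    by (intro sum_multicount_gen) (auto simp: finite_components)
  finally show ?thesis .
qed

lemma inj_on_component_representatives:
  assumes "symp E" "\<C> \<subseteq> components W E" "\<forall>C\<in>\<C>. r C \<in> C"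
  shows "inj_on r \<C>"
proof (rule inj_onI)
  fix C D assume CD: "C \<in> \<C>" "D \<in> \<C>" "r C = r D"
  then have "r C \<in> C" "r C \<in> D"
    using assms(3) by auto
  then show "C = D"
    using components_disjoint[OF assms(1)] assms(2) CD(1,2) by blast
qed

section \<open>Vertex connectivity of Kneser graphs\<close>

lemma exists_bij_betw_map_pair:
  assumes "finite U" "X \<subseteq> U" "Y \<subseteq> U" "X' \<subseteq> U" "Y' \<subseteq> U"
    and "card X = card X'" "card Y = card Y'" "card (X \<inter> Y) = card (X' \<inter> Y')"
  shows "\<exists>\<pi>. bij_betw \<pi> U U \<and> \<pi> ` X = X' \<and> \<pi> ` Y = Y'"
proof -
  have fin: "finite X" "finite Y" "finite X'" "finite Y'"
    using assms finite_subset by metis+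
  have "card (X - Y) = card (X' - Y')" "card (Y - X) = card (Y' - X')"
    using assms(6-8) fin by (simp_all add: card_Diff_subset_Int Int_commute)
  moreover have "card (U - (X \<union> Y)) = card (U - (X' \<union> Y'))"
    using assms card_Un_Int[of X Y] card_Un_Int[of X' Y'] fin by (simp add: card_Diff_subset)
  ultimately obtain f1 f2 f3 f4 where f:
    "bij_betw f1 (X \<inter> Y) (X' \<inter> Y')" "bij_betw f2 (X - Y) (X' - Y')"
    "bij_betw f3 (Y - X) (Y' - X')" "bij_betw f4 (U - (X \<union> Y)) (U - (X' \<union> Y'))"
    using assms(1,8) fin by (metis finite_Diff finite_Int finite_same_card_bij)
  define g where "g z = (if z \<in> X \<inter> Y then f1 z else f2 z)" for z
  define h where "h z = (if z \<in> Y - X then f3 z else f4 z)" for z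
  define \<pi> where "\<pi> z = (if z \<in> X then g z else h z)" for z
  have "bij_betw g ((X \<inter> Y) \<union> (X - Y)) ((X' \<inter> Y') \<union> (X' - Y'))"
    unfolding g_def by (rule bij_betw_disjoint_Un) (use f in auto)
  then have g: "bij_betw g X X'"
    by (simp add: Int_Diff_Un)
  have "bij_betw h ((Y - X) \<union> (U - (X \<union> Y))) ((Y' - X') \<union> (U - (X' \<union> Y')))"
    unfolding h_def by (rule bij_betw_disjoint_Un) (use f in auto)
  moreover have "(Y - X) \<union> (U - (X \<union> Y)) = U - X" "(Y' - X') \<union> (U - (X' \<union> Y')) = U - X'"
    using assms(3,5) by auto
  ultimately have h: "bij_betw h (U - X) (U - X')"
    by simp
  have "bij_betw \<pi> (X \<union> (U - X)) (X' \<union> (U - X'))"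
    unfolding \<pi>_def by (rule bij_betw_disjoint_Un[OF g h]) auto
  moreover have "\<pi> ` X = X'"
    using g unfolding \<pi>_def bij_betw_def by simp
  moreover have "\<pi> ` Y = Y'"
  proof -
    have "\<pi> ` Y = f1 ` (X \<inter> Y) \<union> f3 ` (Y - X)"
      unfolding \<pi>_def g_def h_def by (auto simp: image_iff) 
    then show ?thesis
      using f(1,3) unfolding bij_betw_def by auto
  qed
  ultimately show ?thesis
    using assms(2,4) by (metis Un_Diff_cancel sup.absorb2)
qed

lemma mem_kneser_vertices_iff: "X \<in> kneser_vertices n k \<longleftrightarrow> X \<subseteq> {1..n} \<and> card X = k"
  unfolding kneser_vertices_def by simp

lemma finite_kneser_vertices: "finite (kneser_vertices n k)"
  unfolding kneser_vertices_def by (simp add: finite_subset[of _ "Pow {1..n}"])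

lemma finite_kneser_vertex: "X \<in> kneser_vertices n k \<Longrightarrow> finite X"
  unfolding kneser_vertices_def using finite_subset[of X "{1..n}"] by simp

lemma card_kneser_vertices: "card (kneser_vertices n k) = n choose k"
  unfolding kneser_vertices_def using n_subsets[of "{1..n}" k] by simp

lemma symp_kneser_adj: "symp kneser_adj"
  unfolding kneser_adj_def by (auto intro: sympI)

lemma card_nbhd_kneser_singleton:
  assumes "X \<in> kneser_vertices n k" "1 \<le> k"
  shows "card (nbhd (kneser_vertices n k) kneser_adj {X}) = (n - k) choose k"
proof -
  have X: "X \<subseteq> {1..n}" "card X = k" "X \<noteq> {}"
    using assms by (auto simp: mem_kneser_vertices_iff)
  then have "nbhd (kneser_vertices n k) kneser_adj {X} = {Y. Y \<subseteq> {1..n} - X \<and> card Y = k}"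
    unfolding nbhd_def kneser_adj_def kneser_vertices_def by auto
  moreover have "card ({1..n} - X) = n - k"
    using X by (simp add: card_Diff_subset finite_subset)
  ultimately show ?thesis
    using n_subsets[of "{1..n} - X" k] by simp
qed

lemma graph_automorphism_kneser_image:
  assumes "bij_betw \<pi> {1..n} {1..n}"
  shows "graph_automorphism (kneser_vertices n k) kneser_adj (image \<pi>)"
proof -
  let ?V = "kneser_vertices n k"
  have inj: "inj_on \<pi> {1..n}" and im: "\<pi> ` {1..n} = {1..n}"
    using assms by (simp_all add: bij_betw_def)
  have Pow: "bij_betw (image \<pi>) (Pow {1..n}) (Pow {1..n})"
    using bij_betw_Pow[OF assms] .
  have card_eq: "card (\<pi> ` X) = card X" if "X \<subseteq> {1..n}" for X
    using card_image[OF inj_on_subset[OF inj that]] .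
  have "image \<pi> ` ?V = ?V"
  proof (intro equalityI subsetI)
    fix Y assume "Y \<in> image \<pi> ` ?V"
    then obtain X where "X \<in> ?V" "Y = \<pi> ` X"
      by blast
    then show "Y \<in> ?V"
      using card_eq im by (auto simp: mem_kneser_vertices_iff)
  next
    fix Y assume Y: "Y \<in> ?V"
    then have "Y \<in> image \<pi> ` Pow {1..n}"
      using Pow unfolding bij_betw_def by (simp add: mem_kneser_vertices_iff)
    then obtain X where "X \<subseteq> {1..n}" "Y = \<pi> ` X"
      by blast
    then show "Y \<in> image \<pi> ` ?V"
      using Y card_eq by (auto simp: mem_kneser_vertices_iff)
  qed
  moreover have "inj_on (image \<pi>) ?V"
    using bij_betw_imp_inj_on[OF Pow] by (rule inj_on_subset) (auto simp: kneser_vertices_def)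
  moreover have "kneser_adj (\<pi> ` X) (\<pi> ` Y) \<longleftrightarrow> kneser_adj X Y" if "X \<in> ?V" "Y \<in> ?V" for X Y
  proof -
    have "\<pi> ` X \<inter> \<pi> ` Y = \<pi> ` (X \<inter> Y)"
      using inj_on_image_Int[OF inj] that by (simp add: mem_kneser_vertices_iff)
    then show ?thesis
      unfolding kneser_adj_def by simp
  qed
  ultimately show ?thesis
    unfolding graph_automorphism_def bij_betw_def by blast
qed

text \<open>The symmetric group on \<open>{1..n}\<close> acts transitively on pairs of \<open>k\<close>-sets with a given
  intersection size, and an atom meeting its image under an automorphism is fixed by it.\<close>
lemma kneser_atom_closed:
  assumes "atom (kneser_vertices n k) kneser_adj A" "x0 \<in> A" "w0 \<in> A" "x \<in> A"
    and "y \<in> kneser_vertices n k" "card (x \<inter> y) = card (x0 \<inter> w0)"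
  shows "y \<in> A"
proof -
  let ?V = "kneser_vertices n k"
  have "A \<subseteq> ?V"
    using assms(1) unfolding atom_def fragment_def separated_def by blast
  then have "x0 \<in> ?V" "w0 \<in> ?V" "x \<in> ?V"
    using assms(2-4) by auto
  then obtain \<pi> where \<pi>: "bij_betw \<pi> {1..n} {1..n}" "\<pi> ` x0 = x" "\<pi> ` w0 = y"
    using exists_bij_betw_map_pair[of "{1..n}" x0 w0 x y] assms(5,6)
    unfolding mem_kneser_vertices_iff by (metis finite_atLeastAtMost)
  have "image \<pi> ` A = A"
    using atom_image_eq[OF finite_kneser_vertices symp_kneser_adj
        graph_automorphism_kneser_image[OF \<pi>(1)] assms(1)] assms(2,4) \<pi>(2) by blast
  then show ?thesis
    using assms(3) \<pi>(3) by blast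
qed

lemma kneser_exchange_common_intersection:
  assumes "x \<in> kneser_vertices n k" "a \<in> x" "b \<in> {1..n} - x" "2 * k + 1 \<le> n" "j < k"
  shows "\<exists>z\<in>kneser_vertices n k. card (x \<inter> z) = j \<and> card (insert b (x - {a}) \<inter> z) = j"
proof -
  have x: "x \<subseteq> {1..n}" "card x = k" "finite x"
    using assms(1) finite_subset by (auto simp: mem_kneser_vertices_iff)
  have "j \<le> card (x - {a})"
    using assms(2,5) x by simp
  then obtain Z1 where Z1: "Z1 \<subseteq> x - {a}" "card Z1 = j"
    by (meson obtain_subset_with_card_n)
  have "card ({1..n} - insert b x) = n - (k + 1)"
    using assms(3) x by (simp add: card_Diff_subset)
  then have "k - j \<le> card ({1..n} - insert b x)"
    using assms(4) by linarith
  then obtain Z2 where Z2: "Z2 \<subseteq> {1..n} - insert b x" "card Z2 = k - j"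
    by (meson obtain_subset_with_card_n)
  have "finite Z1" "finite Z2"
    using finite_subset[OF Z1(1)] finite_subset[OF Z2(1)] x(3) by auto
  moreover have "Z1 \<inter> Z2 = {}"
    using Z1(1) Z2(1) by blast
  ultimately have "card (Z1 \<union> Z2) = k"
    using card_Un_disjoint[of Z1 Z2] Z1(2) Z2(2) assms(5) by simp
  then have "Z1 \<union> Z2 \<in> kneser_vertices n k"
    using Z1(1) Z2(1) x(1) by (auto simp: mem_kneser_vertices_iff)
  moreover have "x \<inter> (Z1 \<union> Z2) = Z1" "insert b (x - {a}) \<inter> (Z1 \<union> Z2) = Z1"
    using Z1(1) Z2(1) by auto
  ultimately show ?thesis
    using Z1(2) by metis
qed

lemma kneser_exchange_step:
  assumes "2 * k + 1 \<le> n" "j < k" "x \<in> kneser_vertices n k" "y \<in> kneser_vertices n k"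
    and "card (x - y) = Suc d"
  shows "\<exists>x' z. x' \<in> kneser_vertices n k \<and> z \<in> kneser_vertices n k \<and> card (x' - y) = d
    \<and> card (x \<inter> z) = j \<and> card (z \<inter> x') = j"
proof -
  have xy: "x \<subseteq> {1..n}" "card x = k" "y \<subseteq> {1..n}" "card y = k" "finite x" "finite y"
    using assms(3,4) finite_subset by (auto simp: mem_kneser_vertices_iff)
  then have "card (y - x) = card (x - y)"
    by (simp add: card_Diff_subset_Int Int_commute)
  then obtain a b where ab: "a \<in> x - y" "b \<in> y - x"
    using assms(5) by (metis card.empty ex_in_conv nat.distinct(1))
  let ?x' = "insert b (x - {a})"
  have "0 < card x"
    using ab xy card_gt_0_iff by blast
  then have "?x' \<in> kneser_vertices n k"
    using xy ab by (auto simp: mem_kneser_vertices_iff card_insert_if)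
  moreover have "?x' - y = (x - y) - {a}"
    using ab by blast
  then have "card (?x' - y) = d"
    using assms(5) ab xy(5) by (simp add: card_Diff_singleton)
  moreover have "b \<in> {1..n} - x"
    using ab xy(3) by blast
  then obtain z where "z \<in> kneser_vertices n k" "card (x \<inter> z) = j" "card (?x' \<inter> z) = j"
    using kneser_exchange_common_intersection[OF assms(3) _ _ assms(1,2), of a b] ab by blast
  ultimately show ?thesis
    by (metis Int_commute)
qed

lemma kneser_closed_under_intersection_card:
  assumes "2 * k + 1 \<le> n" "j < k" "A \<subseteq> kneser_vertices n k" "x \<in> A"
    and closed: "\<And>u v. u \<in> A \<Longrightarrow> v \<in> kneser_vertices n k \<Longrightarrow> card (u \<inter> v) = j \<Longrightarrow> v \<in> A"
  shows "A = kneser_vertices n k"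
proof -
  have "y \<in> A" if y: "y \<in> kneser_vertices n k" for y
  proof -
    have "\<forall>x\<in>A. card (x - y) = d \<longrightarrow> y \<in> A" for d
    proof (induction d)
      case 0
      have "x = y" if "x \<in> A" "card (x - y) = 0" for x
      proof -
        have "x \<in> kneser_vertices n k"
          using that(1) assms(3) by blast
        then have "x \<subseteq> y" "card y \<le> card x"
          using that(2) y finite_kneser_vertex by (auto simp: mem_kneser_vertices_iff)
        then show ?thesis
          using card_seteq[OF finite_kneser_vertex[OF y]] by blast
      qed
      then show ?case
        by blast
    next
      case (Suc d)
      show ?case
      proof (intro ballI impI)
        fix x assume "x \<in> A" "card (x - y) = Suc d"
        then obtain x' z where "x' \<in> kneser_vertices n k" "z \<in> kneser_vertices n k"
          "card (x' - y) = d" "card (x \<inter> z) = j" "card (z \<inter> x') = j"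
          using kneser_exchange_step[OF assms(1,2) _ y] assms(3) by blast
        then show "y \<in> A"
          using Suc.IH closed \<open>x \<in> A\<close> by blast
      qed
    qed
    then show ?thesis
      using assms(4) by blast
  qed
  then show ?thesis
    using assms(3) by blast
qed

lemma kneser_atom_singleton:
  assumes "1 \<le> k" "2 * k + 1 \<le> n" "atom (kneser_vertices n k) kneser_adj A"
  shows "\<exists>v. A = {v}"
proof -
  let ?V = "kneser_vertices n k"
  have A: "A \<subseteq> ?V" "A \<noteq> {}" "exterior ?V kneser_adj A \<noteq> {}"
    using assms(3) unfolding atom_def fragment_def separated_def by auto
  have "x0 = w0" if "x0 \<in> A" "w0 \<in> A" for x0 w0
  proof (rule ccontr)
    assume "x0 \<noteq> w0"
    have V: "x0 \<in> ?V" "w0 \<in> ?V"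
      using A(1) that by auto
    have "card (x0 \<inter> w0) \<noteq> k"
    proof
      assume "card (x0 \<inter> w0) = k"
      then have "x0 \<inter> w0 = x0" "x0 \<inter> w0 = w0"
        using card_seteq[OF finite_kneser_vertex[OF V(1)], of "x0 \<inter> w0"]
          card_seteq[OF finite_kneser_vertex[OF V(2)], of "x0 \<inter> w0"] V
        by (auto simp: mem_kneser_vertices_iff)
      then show False
        using \<open>x0 \<noteq> w0\<close> by blast
    qed
    moreover have "card (x0 \<inter> w0) \<le> k"
      using card_mono[OF finite_kneser_vertex[OF V(1)], of "x0 \<inter> w0"] V(1)
      by (simp add: mem_kneser_vertices_iff)
    ultimately have "card (x0 \<inter> w0) < k"
      by simp
    then have "A = ?V"
      using kneser_closed_under_intersection_card[OF assms(2) _ A(1) that(1)]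
        kneser_atom_closed[OF assms(3) that] by blast
    then show False
      using A(3) unfolding exterior_def by auto
  qed
  then show ?thesis
    using A(2) by blast
qed

theorem kneser_card_nbhd_ge:
  assumes "1 \<le> k" "2 * k + 1 \<le> n" "separated (kneser_vertices n k) kneser_adj C"
  shows "(n - k) choose k \<le> card (nbhd (kneser_vertices n k) kneser_adj C)"
proof -
  obtain A where A: "atom (kneser_vertices n k) kneser_adj A"
    using exists_atom[OF assms(3)] by blast
  then obtain v where "A = {v}"
    using kneser_atom_singleton[OF assms(1,2)] by blast
  moreover have "v \<in> kneser_vertices n k"
    using A \<open>A = {v}\<close> unfolding atom_def fragment_def separated_def by auto
  ultimately show ?thesis
    using A assms(1,3) card_nbhd_kneser_singleton unfolding atom_def fragment_def by metis
qed

section \<open>Toughness of Kneser graphs\<close>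

text \<open>Two representatives of different components of \<open>V - S\<close> are non-adjacent, i.e. they meet.\<close>
lemma intersecting_kneser_component_representatives:
  assumes "1 \<le> k" "\<C> \<subseteq> components (kneser_vertices n k - S) kneser_adj" "\<forall>C\<in>\<C>. r C \<in> C"
  shows "intersecting_family (r ` \<C>)"
  unfolding intersecting_family_def
proof (intro ballI)
  fix X X' assume "X \<in> r ` \<C>" "X' \<in> r ` \<C>"
  then obtain C C' where C: "C \<in> \<C>" "X = r C" and C': "C' \<in> \<C>" "X' = r C'"
    by blast
  have comps: "C \<in> components (kneser_vertices n k - S) kneser_adj"
    "C' \<in> components (kneser_vertices n k - S) kneser_adj"
    using assms(2) C(1) C'(1) by blast+
  have X: "X \<in> C" "X' \<in> C'"
    using assms(3) C C' by blast+
  then have V: "X \<in> kneser_vertices n k - S" "X' \<in> kneser_vertices n k - S"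
    using comps component_subset by blast+
  show "X \<inter> X' \<noteq> {}"
  proof (cases "C = C'")
    case True
    have "card X = k"
      using V(1) by (simp add: mem_kneser_vertices_iff)
    then have "X \<noteq> {}"
      using assms(1) by auto
    then show ?thesis
      using True C C' by simp
  next
    case False
    then show ?thesis
      using components_no_edge[OF symp_kneser_adj comps False X] unfolding kneser_adj_def by blast
  qed
qed

lemma card_complement_kneser_vertex:
  "Y \<in> kneser_vertices n k \<Longrightarrow> card ({1..n} - Y) = n - k"
  using finite_kneser_vertex[of Y n k] by (simp add: card_Diff_subset mem_kneser_vertices_iff)

lemma kneser_adjacent_component_representatives:
  assumes "1 \<le> k" "Y \<in> kneser_vertices n k"
    and "\<forall>C\<in>adjacent_components (kneser_vertices n k) kneser_adj S Y. r C \<in> C \<and> r C \<inter> Y = {}"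
  defines "\<A> \<equiv> adjacent_components (kneser_vertices n k) kneser_adj S Y"
  shows "card (r ` \<A>) = card \<A>" "r ` \<A> \<subseteq> {X. X \<subseteq> {1..n} - Y \<and> card X = k}"
    "intersecting_family (r ` \<A>)"
proof -
  have sub: "\<A> \<subseteq> components (kneser_vertices n k - S) kneser_adj"
    unfolding \<A>_def adjacent_components_def by blast
  show "card (r ` \<A>) = card \<A>"
    using inj_on_component_representatives[OF symp_kneser_adj sub] assms(3)
    unfolding \<A>_def by (simp add: card_image)
  show "r ` \<A> \<subseteq> {X. X \<subseteq> {1..n} - Y \<and> card X = k}"
  proof
    fix X assume "X \<in> r ` \<A>"
    then obtain C where C: "C \<in> \<A>" "X = r C"
      by blast
    then have "X \<in> C" "X \<inter> Y = {}"
      using assms(3) unfolding \<A>_def by auto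
    moreover have "C \<subseteq> kneser_vertices n k"
      using sub C(1) component_subset by blast
    ultimately show "X \<in> {X. X \<subseteq> {1..n} - Y \<and> card X = k}"
      unfolding kneser_vertices_def by blast
  qed
  show "intersecting_family (r ` \<A>)"
    using intersecting_kneser_component_representatives[OF assms(1) sub] assms(3)
    unfolding \<A>_def by blast
qed

lemma exists_adjacent_component_representatives:
  "\<exists>r. \<forall>C\<in>adjacent_components V kneser_adj S Y. r C \<in> C \<and> r C \<inter> Y = {}"
proof -
  have "\<forall>C\<in>adjacent_components V kneser_adj S Y. \<exists>X. X \<in> C \<and> X \<inter> Y = {}"
    unfolding adjacent_components_def nbhd_def kneser_adj_def by blast
  then show ?thesis
    by (rule bchoice)
qed

text \<open>The representatives of the components adjacent to \<open>Y\<close> form an intersecting family of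
  \<open>k\<close>-subsets of the \<open>n - k\<close> points outside \<open>Y\<close>.\<close>
lemma card_kneser_adjacent_components_le:
  assumes "1 \<le> k" "3 * k \<le> n" "Y \<in> kneser_vertices n k"
  shows "card (adjacent_components (kneser_vertices n k) kneser_adj S Y) * (n - k)
    \<le> k * ((n - k) choose k)"
proof -
  obtain r where r: "\<forall>C\<in>adjacent_components (kneser_vertices n k) kneser_adj S Y. r C \<in> C \<and> r C \<inter> Y = {}"
    using exists_adjacent_component_representatives by blast
  note F = kneser_adjacent_component_representatives[OF assms(1,3) r]
  have G: "card ({1..n} - Y) = n - k"
    using card_complement_kneser_vertex[OF assms(3)] .
  then have "2 * k \<le> card ({1..n} - Y)"
    using assms(2) by linarith
  then have "card (r ` adjacent_components (kneser_vertices n k) kneser_adj S Y) * card ({1..n} - Y)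
      \<le> k * (card ({1..n} - Y) choose k)"
    using erdos_ko_rado[OF _ F(2,3)] by blast
  then show ?thesis
    using F(1) G by simp
qed

text \<open>Choose \<open>A\<close> as the representative of \<open>C0\<close>: every other representative lies in another
  component, hence meets \<open>B\<close>, and the strict form of the Erdos--Ko--Rado bound applies.\<close>
lemma card_kneser_adjacent_components_less:
  assumes "2 \<le> k" "5 * k \<le> n" "S \<subseteq> kneser_vertices n k" "Y \<in> S"
    and "C0 \<in> components (kneser_vertices n k - S) kneser_adj" "A \<in> C0" "B \<in> C0" "A \<inter> B = {}"
    and "A \<inter> Y = {}" "B \<inter> Y = {}"
  shows "card (adjacent_components (kneser_vertices n k) kneser_adj S Y) * (n - k)
    < k * ((n - k) choose k)"
proof -
  let ?V = "kneser_vertices n k"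
  let ?\<A> = "adjacent_components ?V kneser_adj S Y"
  obtain r where r: "\<forall>C\<in>?\<A>. r C \<in> C \<and> r C \<inter> Y = {}"
    using exists_adjacent_component_representatives by blast
  have C0: "C0 \<subseteq> ?V - S"
    using assms(5) component_subset by blast
  have "C0 \<in> ?\<A>"
    using assms(3-6,9) C0 unfolding adjacent_components_def nbhd_def kneser_adj_def
    by (auto simp: Int_commute)
  define r' where "r' = r(C0 := A)"
  have r': "\<forall>C\<in>?\<A>. r' C \<in> C \<and> r' C \<inter> Y = {}"
    using r assms(6,9) unfolding r'_def by auto
  have Y: "Y \<in> ?V" "card ({1..n} - Y) = n - k"
    using assms(3,4) card_complement_kneser_vertex by auto
  have "1 \<le> k"
    using assms(1) by simp
  note F = kneser_adjacent_component_representatives[OF this Y(1) r']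
  have "X \<inter> B \<noteq> {}" if X: "X \<in> r' ` ?\<A> - {A}" for X
  proof -
    obtain C where C: "C \<in> ?\<A>" "X = r' C" "X \<noteq> A"
      using X by blast
    then have "C \<noteq> C0" "X \<in> C" "C \<in> components (?V - S) kneser_adj"
      using r' unfolding r'_def adjacent_components_def by auto
    then show ?thesis
      using components_no_edge[OF symp_kneser_adj _ assms(5) _ _ assms(7)]
      unfolding kneser_adj_def by blast
  qed
  moreover have "A \<in> r' ` ?\<A>"
    using \<open>C0 \<in> ?\<A>\<close> unfolding r'_def by (intro image_eqI[of _ _ C0]) simp_all
  moreover have "B \<subseteq> {1..n} - Y" "card B = k"
    using C0 assms(7,10) by (auto simp: kneser_vertices_def)
  moreover have "4 * k \<le> card ({1..n} - Y)"
    using Y(2) assms(2) by linarith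
  ultimately have "card (r' ` ?\<A>) * card ({1..n} - Y) < k * (card ({1..n} - Y) choose k)"
    using erdos_ko_rado_strict[OF _ F(2,3) _ assms(1) _ _ _ assms(8)] by blast
  then show ?thesis
    using F(1) Y(2) by simp
qed

lemma exists_kneser_vertex_disjoint:
  assumes "Z \<subseteq> {1..n}" "card Z + k \<le> n"
  shows "\<exists>Y\<in>kneser_vertices n k. Y \<inter> Z = {}"
proof -
  have "k \<le> card ({1..n} - Z)"
    using assms card_Diff_subset[of Z "{1..n}"] finite_subset[OF assms(1)] by simp
  then obtain Y where "Y \<subseteq> {1..n} - Z" "card Y = k"
    by (meson obtain_subset_with_card_n)
  then show ?thesis
    unfolding kneser_vertices_def by blast
qed

text \<open>A \<open>k\<close>-set avoiding an edge of one component and a vertex of another component cannot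
  lie outside the cut.\<close>
lemma kneser_cut_vertex_avoiding_edge:
  assumes "4 * k \<le> n" "2 \<le> num_components (kneser_vertices n k - S) kneser_adj"
    and "C0 \<in> components (kneser_vertices n k - S) kneser_adj" "A \<in> C0" "B \<in> C0"
  shows "\<exists>Y\<in>S. A \<inter> Y = {} \<and> B \<inter> Y = {}"
proof -
  let ?V = "kneser_vertices n k"
  obtain C1 D where C1: "C1 \<in> components (?V - S) kneser_adj" "C1 \<noteq> C0" "D \<in> C1"
    using exists_other_component[OF assms(2,3)] component_nonempty by blast
  have "A \<in> ?V" "B \<in> ?V" "D \<in> ?V"
    using assms(3-5) C1(1,3) component_subset by blast+
  then have "A \<union> B \<union> D \<subseteq> {1..n}" "card A + card B + card D = 3 * k"
    unfolding kneser_vertices_def by (blast, simp)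
  moreover have "card (A \<union> B \<union> D) \<le> card A + card B + card D"
    using card_Un_le[of "A \<union> B" D] card_Un_le[of A B] by linarith
  ultimately obtain Y where Y: "Y \<in> ?V" "Y \<inter> (A \<union> B \<union> D) = {}"
    using exists_kneser_vertex_disjoint[of "A \<union> B \<union> D" n k] assms(1) by auto
  have "Y \<in> S"
  proof (rule ccontr)
    assume "Y \<notin> S"
    then have "Y \<in> C0"
      using component_closed[OF assms(3,4)] Y unfolding kneser_adj_def by blast
    then show False
      using components_no_edge[OF symp_kneser_adj assms(3) C1(1) C1(2)[symmetric] _ C1(3)] Y(2)
      unfolding kneser_adj_def by blast
  qed
  then show ?thesis
    using Y(2) by blast
qed

text \<open>Count the pairs (component \<open>C\<close>, vertex of \<open>S\<close> adjacent to \<open>C\<close>): every component is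
  separated, so it has at least \<open>(n - k) choose k\<close> neighbours, all of them in \<open>S\<close>.\<close>
lemma kneser_cut_double_count:
  assumes "1 \<le> k" "2 * k + 1 \<le> n" "S \<subseteq> kneser_vertices n k"
    and "2 \<le> num_components (kneser_vertices n k - S) kneser_adj"
  shows "(n - k) * num_components (kneser_vertices n k - S) kneser_adj * ((n - k) choose k)
    \<le> (\<Sum>Y\<in>S. card (adjacent_components (kneser_vertices n k) kneser_adj S Y) * (n - k))"
proof -
  let ?V = "kneser_vertices n k"
  let ?C = "components (?V - S) kneser_adj"
  have "num_components (?V - S) kneser_adj * ((n - k) choose k) = (\<Sum>C\<in>?C. (n - k) choose k)"
    unfolding num_components_def by simp
  also have "\<dots> \<le> (\<Sum>C\<in>?C. card (nbhd ?V kneser_adj C))"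
    using kneser_card_nbhd_ge[OF assms(1,2) separated_component[OF symp_kneser_adj assms(4)]]
    by (intro sum_mono) blast
  also have "\<dots> = (\<Sum>Y\<in>S. card (adjacent_components ?V kneser_adj S Y))"
    by (rule sum_card_nbhd_components[OF finite_kneser_vertices assms(3)])
  finally have "(n - k) * (num_components (?V - S) kneser_adj * ((n - k) choose k))
      \<le> (n - k) * (\<Sum>Y\<in>S. card (adjacent_components ?V kneser_adj S Y))"
    by (rule mult_le_mono2)
  then show ?thesis
    by (simp add: sum_distrib_left ac_simps)
qed

theorem kneser_cut_bound:
  assumes "1 \<le> k" "3 * k \<le> n" "S \<subseteq> kneser_vertices n k"
    and "2 \<le> num_components (kneser_vertices n k - S) kneser_adj"
  shows "(n - k) * num_components (kneser_vertices n k - S) kneser_adj \<le> k * card S"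
proof -
  let ?c = "num_components (kneser_vertices n k - S) kneser_adj" and ?d = "(n - k) choose k"
  have "2 * k + 1 \<le> n"
    using assms(1,2) by linarith
  then have "(n - k) * ?c * ?d
      \<le> (\<Sum>Y\<in>S. card (adjacent_components (kneser_vertices n k) kneser_adj S Y) * (n - k))"
    using kneser_cut_double_count assms(1,3,4) by blast
  also have "\<dots> \<le> (\<Sum>Y\<in>S. k * ?d)"
    using card_kneser_adjacent_components_le[OF assms(1,2)] assms(3) by (intro sum_mono) blast
  finally have "((n - k) * ?c) * ?d \<le> (k * card S) * ?d"
    by (simp add: ac_simps)
  moreover have "0 < ?d"
    using assms(2) by simp
  ultimately show ?thesis
    by simp
qed

lemma kneser_cut_bound_strict:
  assumes "2 \<le> k" "5 * k \<le> n" "S \<subseteq> kneser_vertices n k"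
    and "2 \<le> num_components (kneser_vertices n k - S) kneser_adj"
    and "A \<in> kneser_vertices n k - S" "B \<in> kneser_vertices n k - S" "kneser_adj A B"
  shows "(n - k) * num_components (kneser_vertices n k - S) kneser_adj < k * card S"
proof -
  let ?V = "kneser_vertices n k"
  let ?a = "\<lambda>Y. card (adjacent_components ?V kneser_adj S Y) * (n - k)"
  let ?c = "num_components (?V - S) kneser_adj" and ?d = "(n - k) choose k"
  define C0 where "C0 = component_of (?V - S) kneser_adj A"
  have C0: "C0 \<in> components (?V - S) kneser_adj" "A \<in> C0"
    unfolding C0_def using component_of_in_components[OF assms(5)] component_of_self[OF assms(5)] .
  have "B \<in> C0"
    using component_closed[OF C0 assms(6,7)] .
  moreover have "4 * k \<le> n"
    using assms(2) by linarith
  ultimately obtain Y where Y: "Y \<in> S" "A \<inter> Y = {}" "B \<inter> Y = {}"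
    using kneser_cut_vertex_avoiding_edge[OF _ assms(4) C0] by blast
  have "1 \<le> k" "2 * k + 1 \<le> n"
    using assms(1,2) by linarith+
  then have "(n - k) * ?c * ?d \<le> (\<Sum>Y\<in>S. ?a Y)"
    using kneser_cut_double_count assms(3,4) by blast
  also have "\<dots> < (\<Sum>Y\<in>S. k * ?d)"
  proof (rule sum_strict_mono_ex1)
    show "finite S"
      using assms(3) finite_kneser_vertices by (rule finite_subset)
    show "\<forall>Y\<in>S. ?a Y \<le> k * ?d"
      using card_kneser_adjacent_components_le[OF \<open>1 \<le> k\<close>] assms(2,3) by auto
    have "A \<inter> B = {}"
      using assms(7) unfolding kneser_adj_def .
    then show "\<exists>Y\<in>S. ?a Y < k * ?d"
      using card_kneser_adjacent_components_less[OF assms(1-3) Y(1) C0 \<open>B \<in> C0\<close> _ Y(2,3)] Y(1)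
      by blast
  qed
  finally have "((n - k) * ?c) * ?d < (k * card S) * ?d"
    by (simp add: ac_simps)
  then show ?thesis
    by simp
qed

lemma kneser_independent_card_le:
  assumes "independent_set (kneser_vertices n k) kneser_adj J" "2 * k \<le> n"
  shows "card J * n \<le> k * (n choose k)"
proof -
  have "J \<subseteq> {X. X \<subseteq> {1..n} \<and> card X = k}" "intersecting_family J"
    using assms(1) unfolding independent_set_def intersecting_family_def kneser_adj_def
      kneser_vertices_def by auto
  then show ?thesis
    using erdos_ko_rado[of "{1..n}" J k] assms(2) by simp
qed

lemma card_add_card_kneser_complement:
  assumes "S \<subseteq> kneser_vertices n k"
  shows "card S + card (kneser_vertices n k - S) = n choose k"
proof -
  have "finite S"
    using assms finite_kneser_vertices by (rule finite_subset)
  then have "card (kneser_vertices n k - S) = card (kneser_vertices n k) - card S"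
    using assms by (rule card_Diff_subset)
  moreover have "card S \<le> card (kneser_vertices n k)"
    using assms finite_kneser_vertices by (rule card_mono[rotated])
  ultimately show ?thesis
    using card_kneser_vertices by simp
qed

lemma kneser_cut_eq_imp_max_independent:
  assumes "2 \<le> k" "5 * k \<le> n" "S \<subseteq> kneser_vertices n k"
    and "2 \<le> num_components (kneser_vertices n k - S) kneser_adj"
    and "(n - k) * num_components (kneser_vertices n k - S) kneser_adj = k * card S"
  shows "maximum_independent_set (kneser_vertices n k) kneser_adj (kneser_vertices n k - S)"
proof -
  let ?V = "kneser_vertices n k"
  have "\<not> kneser_adj x y" if "x \<in> ?V - S" "y \<in> ?V - S" for x y
    using kneser_cut_bound_strict[OF assms(1-4) that] assms(5) by linarith
  then have indep: "independent_set ?V kneser_adj (?V - S)"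
    unfolding independent_set_def by blast
  then have c: "num_components (?V - S) kneser_adj = card (?V - S)"
    using num_components_edgeless unfolding independent_set_def by blast
  have "k * (n choose k) = k * card S + k * card (?V - S)"
    using card_add_card_kneser_complement[OF assms(3)] by (simp flip: distrib_left)
  also have "\<dots> = (n - k + k) * card (?V - S)"
    using assms(5) c by (simp add: add_mult_distrib)
  finally have "k * (n choose k) = n * card (?V - S)"
    using assms(2) by simp
  then have "card J \<le> card (?V - S)" if "independent_set ?V kneser_adj J" for J
    using kneser_independent_card_le[OF that] assms(1,2) by (simp add: mult.commute)
  then show ?thesis
    using indep unfolding maximum_independent_set_def by blast
qed

lemma card_kneser_star:
  assumes "1 \<le> k" "1 \<le> n"
  shows "card {X \<in> kneser_vertices n k. 1 \<in> X} = (n - 1) choose (k - 1)"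
proof -
  let ?T = "{Z. Z \<subseteq> {2..n} \<and> card Z = k - 1}"
  have bij: "bij_betw (insert 1) ?T {X \<in> kneser_vertices n k. 1 \<in> X}"
  proof (rule bij_betw_byWitness[where f' = "\<lambda>X. X - {1}"])
    have notin: "1 \<notin> Z" if "Z \<in> ?T" for Z
      using that by (auto simp: subset_iff)
    then show "\<forall>Z\<in>?T. insert 1 Z - {1} = Z"
      by auto
    show "\<forall>X\<in>{X \<in> kneser_vertices n k. 1 \<in> X}. insert 1 (X - {1}) = X"
      by auto
    show "insert 1 ` ?T \<subseteq> {X \<in> kneser_vertices n k. 1 \<in> X}"
      using assms notin finite_subset[of _ "{2..n}"]
      by (auto simp: mem_kneser_vertices_iff card_insert_if)
    show "(\<lambda>X. X - {1}) ` {X \<in> kneser_vertices n k. 1 \<in> X} \<subseteq> ?T"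
      by (auto simp: mem_kneser_vertices_iff)
  qed
  have "card ?T = (n - 1) choose (k - 1)"
    using n_subsets[of "{2..n}" "k - 1"] by simp
  then show ?thesis
    using bij_betw_same_card[OF bij] by simp
qed

lemma cut_ratio_le_iff:
  fixes n k s c :: nat
  assumes "0 < k" "k \<le> n" "0 < c"
  shows "real n / real k - 1 \<le> real s / real c \<longleftrightarrow> (n - k) * c \<le> k * s"
proof -
  have "real n / real k - 1 \<le> real s / real c \<longleftrightarrow> real ((n - k) * c) \<le> real (k * s)"
    using assms by (simp add: field_simps)
  then show ?thesis
    by (simp only: of_nat_le_iff)
qed

lemma cut_ratio_eq_iff:
  fixes n k s c :: nat
  assumes "0 < k" "k \<le> n" "0 < c"
  shows "real n / real k - 1 = real s / real c \<longleftrightarrow> (n - k) * c = k * s"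
proof -
  have "real n / real k - 1 = real s / real c \<longleftrightarrow> real ((n - k) * c) = real (k * s)"
    using assms by (simp add: field_simps)
  then show ?thesis
    by (simp only: of_nat_eq_iff)
qed

lemma kneser_star_complement_cut:
  assumes "2 \<le> k" "k < n"
  defines "S \<equiv> kneser_vertices n k - {X \<in> kneser_vertices n k. 1 \<in> X}"
  shows "vertex_cut (kneser_vertices n k) kneser_adj S"
    "(n - k) * num_components (kneser_vertices n k - S) kneser_adj = k * card S"
proof -
  let ?V = "kneser_vertices n k" and ?I = "{X \<in> kneser_vertices n k. 1 \<in> X}"
  have "?V - S = ?I"
    unfolding S_def by blast
  then have c: "num_components (?V - S) kneser_adj = (n - 1) choose (k - 1)"
    using num_components_edgeless[of ?I kneser_adj] card_kneser_star assms(1,2)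
    unfolding kneser_adj_def by auto
  have "2 \<le> k choose (k - 1)"
    using assms(1) binomial_symmetric[of "k - 1" k] by simp
  also have "\<dots> \<le> (n - 1) choose (k - 1)"
    using assms(2) by (intro binomial_right_mono) simp
  finally show "vertex_cut ?V kneser_adj S"
    using c unfolding vertex_cut_def S_def by simp
  have "card S = (n choose k) - card ?I"
    using card_add_card_kneser_complement[of S n k] \<open>?V - S = ?I\<close> unfolding S_def by auto
  then have "k * card S = k * (n choose k) - k * card ?I"
    by (simp add: diff_mult_distrib2)
  also have "\<dots> = (n - k) * card ?I"
    using times_binomial_minus1_eq[of k n] card_kneser_star assms by (simp add: diff_mult_distrib)
  finally show "(n - k) * num_components (?V - S) kneser_adj = k * card S"
    using c card_kneser_star assms by simp
qed

lemma toughness_eqI: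
  assumes "finite V" "vertex_cut V E S0" "real (card S0) / real (num_components (V - S0) E) = t"
    and "\<And>S. vertex_cut V E S \<Longrightarrow> t \<le> real (card S) / real (num_components (V - S) E)"
  shows "toughness V E = t"
  unfolding toughness_def
proof (rule Min_eqI)
  have "{real (card S) / real (num_components (V - S) E) |S. vertex_cut V E S}
      \<subseteq> (\<lambda>S. real (card S) / real (num_components (V - S) E)) ` Pow V"
    unfolding vertex_cut_def by blast
  then show "finite {real (card S) / real (num_components (V - S) E) |S. vertex_cut V E S}"
    using assms(1) finite_subset by blast
qed (use assms(2-) in auto)

lemma five_k_le_n_of_bound:
  fixes n k :: nat
  assumes "k \<ge> 5"
    and "real n \<ge> 2 / ln 2 * (real k)^2 + (2 - 3 / ln 2) * real k + 1 / ln 2"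
  shows "5 * k \<le> n"
proof -
  define x where "x = (2 * real k - 1) * (real k - 1)"
  have "0 \<le> x"
    unfolding x_def using assms(1) by simp
  then have "x \<le> x / ln 2"
    using ln_2_less_1 by (simp add: le_divide_eq mult_left_le)
  moreover have "2 / ln 2 * (real k)^2 + (2 - 3 / ln 2) * real k + 1 / ln 2 = x / ln 2 + 2 * real k"
    unfolding x_def by (simp add: field_simps power2_eq_square)
  moreover have "real k * 6 \<le> real k * (2 * real k)"
    using assms(1) by (intro mult_left_mono) auto
  then have "x + 2 * real k \<ge> 5 * real k"
    unfolding x_def by (simp add: algebra_simps)
  ultimately show ?thesis
    using assms(2) by linarith
qed

theorem kneser_toughness:
  assumes "2 \<le> k" "3 * k \<le> n"
  shows "toughness (kneser_vertices n k) kneser_adj = real n / real k - 1"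
proof -
  let ?V = "kneser_vertices n k"
  let ?S0 = "?V - {X \<in> ?V. 1 \<in> X}"
  have k: "0 < k" "k < n"
    using assms by auto
  note S0 = kneser_star_complement_cut[OF assms(1) k(2)]
  have c_pos: "0 < num_components (?V - S) kneser_adj" if "vertex_cut ?V kneser_adj S" for S
    using that unfolding vertex_cut_def by simp
  show ?thesis
  proof (rule toughness_eqI[OF finite_kneser_vertices S0(1)])
    have "real n / real k - 1 = real (card ?S0) / real (num_components (?V - ?S0) kneser_adj)"
      using cut_ratio_eq_iff[OF k(1) _ c_pos[OF S0(1)], of n "card ?S0"] k(2) S0(2) by simp
    then show "real (card ?S0) / real (num_components (?V - ?S0) kneser_adj) = real n / real k - 1"
      by simp
    show "real n / real k - 1 \<le> real (card S) / real (num_components (?V - S) kneser_adj)"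
      if "vertex_cut ?V kneser_adj S" for S
      using cut_ratio_le_iff[OF k(1) _ c_pos[OF that]] kneser_cut_bound[of k n S] that assms k(2)
      unfolding vertex_cut_def by simp
  qed
qed

theorem kneser_toughness_attained:
  assumes "2 \<le> k" "5 * k \<le> n" "vertex_cut (kneser_vertices n k) kneser_adj S"
    and "toughness (kneser_vertices n k) kneser_adj
      = real (card S) / real (num_components (kneser_vertices n k - S) kneser_adj)"
  shows "maximum_independent_set (kneser_vertices n k) kneser_adj (kneser_vertices n k - S)"
proof -
  have cut: "S \<subseteq> kneser_vertices n k" "2 \<le> num_components (kneser_vertices n k - S) kneser_adj"
    using assms(3) unfolding vertex_cut_def by auto
  then have "(n - k) * num_components (kneser_vertices n k - S) kneser_adj = k * card S"
    using cut_ratio_eq_iff[of k n] assms kneser_toughness[OF assms(1)] by simp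
  then show ?thesis
    using kneser_cut_eq_imp_max_independent[OF assms(1,2) cut] by blast
qed

theorem theorem1p3:
  fixes n k :: nat
  assumes "k \<ge> 5"
    and "real n \<ge> 2 / ln 2 * (real k)^2 + (2 - 3 / ln 2) * real k + 1 / ln 2"
  shows "toughness (kneser_vertices n k) kneser_adj = real n / real k - 1
    \<and> (\<forall>S. vertex_cut (kneser_vertices n k) kneser_adj S \<and>
           toughness (kneser_vertices n k) kneser_adj
             = real (card S) / real (num_components (kneser_vertices n k - S) kneser_adj)
         \<longrightarrow> (\<exists>I. maximum_independent_set (kneser_vertices n k) kneser_adj I
                   \<and> S = kneser_vertices n k - I))"
proof -
  have nk: "5 * k \<le> n"
    using five_k_le_n_of_bound[OF assms] .
  moreover have "2 \<le> k"
    using assms(1) by simp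
  moreover have "S = kneser_vertices n k - (kneser_vertices n k - S)"
    if "vertex_cut (kneser_vertices n k) kneser_adj S" for S
    using that unfolding vertex_cut_def by blast
  ultimately show ?thesis
    using kneser_toughness[of k n] kneser_toughness_attained[of k n] by fastforce
qed

end
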